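(* Every HW-matrix $A\in\mathcal S^{n\times n}$ has odd degree $n$.
   Context: $\mathcal S=\{0,1,2,3\}$ is the Klein four-group ($\mathbb Z_2$-vector space) with $x+x=0$, $1+2=3$, $1+3=2$, $2+3=1$. A square matrix over $\mathcal S$ is distinguished if it has $1$ on the diagonal and $2$ or $3$ in every off-diagonal entry. $\mathcal P_n$ denotes the power set of $\{1,\dots,n\}$, a $\mathbb Z_2$-algebra with symmetric difference as addition and intersection as multiplication, $0=\emptyset$, $1=\{1,\dots,n\}$. For $U\in\mathcal P_n$, $c_j^U(A)=\sum_{i\in U}A_{ij}$, $c_j(A)=c_j^{\{1..n\}}(A)$, and $J_A(U)=\{j: c_j^U(A)=1\}$. $A\in\mathcal S^{n\times n}$ is an HW-matrix if (i) $A$ is distinguished, (ii) $c_j(A)=0$ for all $j$, (iii) $J_A(U)\ne\emptyset$ for every $U\in\mathcal P_n\setminus\{\emptyset,\{1,\dots,n\}\}$. *)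

theory Defs
  imports Main
begin

datatype klein = K0 | K1 | K2 | K3

fun klein_add :: "klein \<Rightarrow> klein \<Rightarrow> klein" where
  "klein_add K0 y = y"
| "klein_add x K0 = x"
| "klein_add K1 K1 = K0"
| "klein_add K2 K2 = K0"
| "klein_add K3 K3 = K0"
| "klein_add K1 K2 = K3"
| "klein_add K2 K1 = K3"
| "klein_add K1 K3 = K2"
| "klein_add K3 K1 = K2"
| "klein_add K2 K3 = K1"
| "klein_add K3 K2 = K1"

instantiation klein :: comm_monoid_add
begin
definition zero_klein :: klein where "zero_klein = K0"
definition plus_klein :: "klein \<Rightarrow> klein \<Rightarrow> klein" where "plus_klein = klein_add"
instance
proof
  fix a b c :: klein
  show "a + b + c = a + (b + c)"
    unfolding plus_klein_def by (cases a; cases b; cases c) simp_all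
  show "a + b = b + a"
    unfolding plus_klein_def by (cases a; cases b) simp_all
  show "0 + a = a"
    unfolding plus_klein_def zero_klein_def by simp
qed
end

text \<open>Matrices in S^{n x n} are represented as functions nat => nat => klein,
  with rows/columns indexed by {1..n} (entries outside are irrelevant).\<close>

type_synonym kmat = "nat \<Rightarrow> nat \<Rightarrow> klein"

definition distinguished :: "nat \<Rightarrow> kmat \<Rightarrow> bool" where
  "distinguished n A \<longleftrightarrow>
     (\<forall>i\<in>{1..n}. A i i = K1) \<and>
     (\<forall>i\<in>{1..n}. \<forall>j\<in>{1..n}. i \<noteq> j \<longrightarrow> A i j = K2 \<or> A i j = K3)"

definition colsum :: "nat set \<Rightarrow> kmat \<Rightarrow> nat \<Rightarrow> klein" where
  "colsum U A j = (\<Sum>i\<in>U. A i j)"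

definition J_set :: "nat \<Rightarrow> kmat \<Rightarrow> nat set \<Rightarrow> nat set" where
  "J_set n A U = {j\<in>{1..n}. colsum U A j = K1}"

definition HW_matrix :: "nat \<Rightarrow> kmat \<Rightarrow> bool" where
  "HW_matrix n A \<longleftrightarrow>
     distinguished n A \<and>
     (\<forall>j\<in>{1..n}. colsum {1..n} A j = K0) \<and>
     (\<forall>U. U \<subseteq> {1..n} \<and> U \<noteq> {} \<and> U \<noteq> {1..n} \<longrightarrow> J_set n A U \<noteq> {})"

end

theory Submission
  imports Defs
begin

text \<open>The quotient map S \<rightarrow> S/{0,1} = Z2 sends the diagonal entry 1 of a column to 0 and
  every off-diagonal entry (2 or 3) to 1. A column of a distinguished matrix therefore maps
  to n - 1, whereas condition (ii) forces its image to vanish; hence n - 1 is even.\<close>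

fun klein_high :: "klein \<Rightarrow> bool" where
  "klein_high K0 = False"
| "klein_high K1 = False"
| "klein_high K2 = True"
| "klein_high K3 = True"

lemma klein_high_add: "klein_high (a + b) \<longleftrightarrow> klein_high a \<noteq> klein_high b"
  unfolding plus_klein_def by (cases a; cases b) simp_all

lemma klein_high_sum:
  assumes "finite U"
  shows "klein_high (\<Sum>i\<in>U. f i) \<longleftrightarrow> odd (card {i\<in>U. klein_high (f i)})"
  using assms
proof (induction U rule: finite_induct)
  case empty
  then show ?case by (simp add: zero_klein_def)
next
  case (insert x F)
  have "finite {i\<in>F. klein_high (f i)}" and "x \<notin> {i\<in>F. klein_high (f i)}"
    using insert by simp_all
  then show ?case using insert
    by (cases "klein_high (f x)") (auto simp: klein_high_add insert_compr[symmetric] Collect_conj_eq)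
qed

lemma distinguished_column_high_entries:
  assumes "distinguished n A" and "j \<in> {1..n}"
  shows "{i\<in>{1..n}. klein_high (A i j)} = {1..n} - {j}"
proof -
  have "A j j = K1" and "\<And>i. i \<in> {1..n} \<Longrightarrow> i \<noteq> j \<Longrightarrow> A i j = K2 \<or> A i j = K3"
    using assms unfolding distinguished_def by auto
  then show ?thesis by fastforce
qed

lemma distinguished_colsum_high:
  assumes "distinguished n A" and "j \<in> {1..n}"
  shows "klein_high (colsum {1..n} A j) \<longleftrightarrow> even n"
proof -
  have "card ({1..n} - {j}) = n - 1"
    using assms(2) by simp
  moreover have "n \<ge> 1"
    using assms(2) by simp
  ultimately show ?thesis
    using distinguished_column_high_entries[OF assms]
    by (simp add: colsum_def klein_high_sum)
qed

theorem mainTheorem3: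
  fixes n :: nat and A :: kmat
  assumes "n \<ge> 1" and "HW_matrix n A"
  shows "odd n"
proof -
  have "distinguished n A" and "colsum {1..n} A 1 = K0"
    using assms unfolding HW_matrix_def by auto
  then show ?thesis
    using distinguished_colsum_high[of n A 1] assms(1) by simp
qed

end
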